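(* For any $d\in\mathbb{N}$ and positive integers $m_1,\dots,m_{2d}$, the matrix $\mathsf{C}\mathsf{W}(m_1,\dots,m_{2d})$ has five distinct positive real eigenvalues, namely $1$ and $$\frac{t+4s\pm\sqrt{(t+4s)^2-4}}{2},\qquad \frac{t\pm\sqrt{t^2-4}}{2},$$ where $t=\operatorname{tr}(W_1(m_1,\dots,m_{2d}))$ and $s=\operatorname{tr}^*(W_1(m_1,\dots,m_{2d}))$. Moreover $$\frac{t+4s+\sqrt{(t+4s)^2-4}}{2}>\frac{t+\sqrt{t^2-4}}{2}>1>\frac{t-\sqrt{t^2-4}}{2}>\frac{t+4s-\sqrt{(t+4s)^2-4}}{2}.$$
   Context: $A_1=\begin{pmatrix}1&1\\0&1\end{pmatrix}$, $B_1=\begin{pmatrix}1&0\\1&1\end{pmatrix}$, $W_1(m_1,\dots,m_{2d})=\prod_{i=1}^dA_1^{m_{2i-1}}B_1^{m_{2i}}$. With $\mathsf{A}=\begin{pmatrix}1&1&0&0&2\\0&1&0&0&0\\0&0&1&1&0\\0&0&0&1&0\\0&0&0&0&1\end{pmatrix}$, $\mathsf{B}=\begin{pmatrix}1&0&0&0&0\\1&1&0&0&0\\0&0&1&0&0\\0&0&1&1&2\\0&0&0&0&1\end{pmatrix}$, $\mathsf{C}=\begin{pmatrix}1&0&0&0&0\\0&1&0&0&0\\0&0&1&0&0\\0&0&0&1&0\\2&0&0&2&1\end{pmatrix}$, let $\mathsf{W}(m_1,\dots,m_{2d})=\prod_{i=1}^d\mathsf{A}^{m_{2i-1}}\mathsf{B}^{m_{2i}}$.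 $\operatorname{tr}^*(M)=M_{1,2}+M_{2,1}$ is the anti-trace. *)

theory Defs
  imports "Jordan_Normal_Form.Matrix" "Jordan_Normal_Form.Char_Poly"
begin

definition A1 :: "real mat" where
  "A1 = mat_of_rows_list 2 [[1,1],[0,1]]"

definition B1 :: "real mat" where
  "B1 = mat_of_rows_list 2 [[1,0],[1,1]]"

definition Am :: "real mat" where
  "Am = mat_of_rows_list 5
     [[1,1,0,0,2],
      [0,1,0,0,0],
      [0,0,1,1,0],
      [0,0,0,1,0],
      [0,0,0,0,1]]"

definition Bm :: "real mat" where
  "Bm = mat_of_rows_list 5
     [[1,0,0,0,0],
      [1,1,0,0,0],
      [0,0,1,0,0],
      [0,0,1,1,2],
      [0,0,0,0,1]]"

definition Cm :: "real mat" where
  "Cm = mat_of_rows_list 5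
     [[1,0,0,0,0],
      [0,1,0,0,0],
      [0,0,1,0,0],
      [0,0,0,1,0],
      [2,0,0,2,1]]"

text \<open>Generic word: product over i = 1..d of X^(m_(2i-1)) Y^(m_(2i)),
  with the exponents m_1..m_(2d) stored as m 0, ..., m (2d-1); product taken left to right.\<close>
fun word :: "nat \<Rightarrow> real mat \<Rightarrow> real mat \<Rightarrow> (nat \<Rightarrow> nat) \<Rightarrow> nat \<Rightarrow> real mat" where
  "word n X Y m 0 = 1\<^sub>m n"
| "word n X Y m (Suc k) = word n X Y m k * (X ^\<^sub>m m (2*k) * Y ^\<^sub>m m (2*k+1))"

definition W1 :: "(nat \<Rightarrow> nat) \<Rightarrow> nat \<Rightarrow> real mat" where
  "W1 m d = word 2 A1 B1 m d"

definition Wm :: "(nat \<Rightarrow> nat) \<Rightarrow> nat \<Rightarrow> real mat" where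
  "Wm m d = word 5 Am Bm m d"

definition tr2 :: "real mat \<Rightarrow> real" where
  "tr2 M = M $$ (0,0) + M $$ (1,1)"

definition antitr :: "real mat \<Rightarrow> real" where
  "antitr M = M $$ (0,1) + M $$ (1,0)"

end

(* The map lift sends a 2 x 2 matrix M to diag(M, M, 1) conjugated by a translation, so it is
   multiplicative and carries A1, B1 to Am, Bm; hence Wm = lift W1.  For every 2 x 2 matrix W of
   determinant 1 the characteristic polynomial of Cm * lift W factors as
   -(k - 1) (k^2 - t k + 1) (k^2 - (t + 4 s) k + 1), with t and s the trace and anti-trace of W.
   Every A1^p B1^q dominates the identity entrywise, hence so does W1, and positive exponents in
   the last factor force t > 2 and s > 0.  Each quadratic then has two distinct positive roots
   with product 1, and the larger coefficient t + 4 s pushes its roots outside those of t. *)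

theory Submission
  imports Defs
begin

lemma less_2_cases: "(i::nat) < 2 \<longleftrightarrow> i = 0 \<or> i = 1"
  by auto

lemma less_5_cases: "(i::nat) < 5 \<longleftrightarrow> i = 0 \<or> i = 1 \<or> i = 2 \<or> i = 3 \<or> i = 4"
  by auto

lemma sum_upt_2: "(\<Sum>i = 0..<2::nat. f i) = f 0 + f 1"
  by (simp add: numeral_eq_Suc atLeast0LessThan lessThan_Suc add_ac)

lemma sum_upt_5: "(\<Sum>i = 0..<5::nat. f i) = f 0 + f 1 + f 2 + f 3 + f 4"
  by (simp add: numeral_eq_Suc atLeast0LessThan lessThan_Suc add_ac)

lemma mat2_dim [simp]:
  "dim_row (mat_of_rows_list 2 [[x, y], [z, w]]) = 2"
  "dim_col (mat_of_rows_list 2 [[x, y], [z, w]]) = 2"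
  by (simp_all add: mat_of_rows_list_def)

lemma mat2_carrier [simp]: "mat_of_rows_list 2 [[x, y], [z, w]] \<in> carrier_mat 2 2"
  by (rule carrier_matI) simp_all

lemma mat2_index [simp]:
  "mat_of_rows_list 2 [[x, y], [z, w]] $$ (0, 0) = x"
  "mat_of_rows_list 2 [[x, y], [z, w]] $$ (0, Suc 0) = y"
  "mat_of_rows_list 2 [[x, y], [z, w]] $$ (Suc 0, 0) = z"
  "mat_of_rows_list 2 [[x, y], [z, w]] $$ (Suc 0, Suc 0) = w"
  by (simp_all add: mat_of_rows_list_def)

lemma mat2_eqI:
  assumes "A \<in> carrier_mat 2 2" "B \<in> carrier_mat 2 2"
    and "A $$ (0, 0) = B $$ (0, 0)" "A $$ (0, 1) = B $$ (0, 1)"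
    and "A $$ (1, 0) = B $$ (1, 0)" "A $$ (1, 1) = B $$ (1, 1)"
  shows "A = B"
proof (rule eq_matI)
  fix i j assume "i < dim_row B" "j < dim_col B"
  with assms show "A $$ (i, j) = B $$ (i, j)"
    by (auto simp: less_2_cases)
qed (use assms in auto)

lemma index_mult_mat2:
  assumes "X \<in> carrier_mat 2 2" "Y \<in> carrier_mat 2 2" "i < 2" "j < 2"
  shows "(X * Y) $$ (i, j) = X $$ (i, 0) * Y $$ (0, j) + X $$ (i, 1) * Y $$ (1, j)"
  using assms by (simp add: scalar_prod_def sum_upt_2)

lemma mat2_of_entries:
  "A \<in> carrier_mat 2 2 \<Longrightarrow>
    A = mat_of_rows_list 2 [[A $$ (0, 0), A $$ (0, 1)], [A $$ (1, 0), A $$ (1, 1)]]"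
  by (rule mat2_eqI) simp_all

lemma mult_mat2:
  "mat_of_rows_list 2 [[x, y], [z, w]] * mat_of_rows_list 2 [[x', y'], [z', w']] =
    mat_of_rows_list 2
      [[x * x' + y * z', x * y' + y * w'], [z * x' + w * z', z * y' + w * (w' :: 'a :: comm_ring_1)]]"
  by (rule mat2_eqI[OF mult_carrier_mat[OF mat2_carrier mat2_carrier] mat2_carrier])
    (simp_all add: scalar_prod_def sum_upt_2)

lemma one_mat2: "1\<^sub>m 2 = mat_of_rows_list 2 [[1, 0], [0, 1 :: 'a :: comm_ring_1]]"
  by (rule mat2_eqI) simp_all

lemma A1_pow: "A1 ^\<^sub>m p = mat_of_rows_list 2 [[1, real p], [0, 1]]"
  by (induction p) (simp_all add: one_mat2 A1_def mult_mat2)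

lemma B1_pow: "B1 ^\<^sub>m q = mat_of_rows_list 2 [[1, 0], [real q, 1]]"
  by (induction q) (simp_all add: one_mat2 B1_def mult_mat2 add.commute)

lemma A1_pow_B1_pow:
  "A1 ^\<^sub>m p * B1 ^\<^sub>m q = mat_of_rows_list 2 [[1 + real p * real q, real p], [real q, 1]]"
  by (simp add: A1_pow B1_pow mult_mat2)

lemma A1_pow_B1_pow_carrier: "A1 ^\<^sub>m p * B1 ^\<^sub>m q \<in> carrier_mat 2 2"
  by (simp add: A1_pow_B1_pow)

lemma word2_carrier: "word 2 A1 B1 m k \<in> carrier_mat 2 2"
  by (induction k) (simp_all add: A1_pow_B1_pow_carrier)

text \<open>With \<open>N = diag(M, M)\<close> and \<open>u = (0, 1, 1, 0)\<close>, \<open>lift M\<close> is the block matrix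
  \<open>[[N, 2 (N - 1) u], [0, 1]]\<close>, i.e. \<open>diag(N, 1)\<close> conjugated by the translation by \<open>-2 u\<close>;
  hence \<open>lift\<close> is multiplicative.\<close>
definition lift :: "real mat \<Rightarrow> real mat" where
  "lift M = mat_of_rows_list 5
     [[M $$ (0, 0), M $$ (0, 1), 0, 0, 2 * M $$ (0, 1)],
      [M $$ (1, 0), M $$ (1, 1), 0, 0, 2 * M $$ (1, 1) - 2],
      [0, 0, M $$ (0, 0), M $$ (0, 1), 2 * M $$ (0, 0) - 2],
      [0, 0, M $$ (1, 0), M $$ (1, 1), 2 * M $$ (1, 0)],
      [0, 0, 0, 0, 1]]"

lemma lift_dim [simp]: "dim_row (lift M) = 5" "dim_col (lift M) = 5"
  by (simp_all add: lift_def mat_of_rows_list_def)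

lemma lift_mult:
  assumes "X \<in> carrier_mat 2 2" "Y \<in> carrier_mat 2 2"
  shows "lift (X * Y) = lift X * lift Y"
proof (rule eq_matI)
  fix i j assume ij: "i < dim_row (lift X * lift Y)" "j < dim_col (lift X * lift Y)"
  have "(lift X * lift Y) $$ (i, j) = (\<Sum>k = 0..<5. lift X $$ (i, k) * lift Y $$ (k, j))"
    using ij by (simp add: scalar_prod_def)
  also have "\<dots> = lift (X * Y) $$ (i, j)"
    using ij unfolding sum_upt_5 index_mult_mat lift_dim less_5_cases
    by (elim disjE) (simp_all add: lift_def mat_of_rows_list_def index_mult_mat2[OF assms] algebra_simps)
  finally show "lift (X * Y) $$ (i, j) = (lift X * lift Y) $$ (i, j)" ..
qed simp_all

lemma lift_one: "lift (1\<^sub>m 2) = 1\<^sub>m 5"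
  by (rule eq_matI) (auto simp: lift_def mat_of_rows_list_def less_5_cases)

lemma lift_A1: "lift A1 = Am"
  by (rule eq_matI) (auto simp: lift_def A1_def Am_def mat_of_rows_list_def less_5_cases)

lemma lift_B1: "lift B1 = Bm"
  by (rule eq_matI) (auto simp: lift_def B1_def Bm_def mat_of_rows_list_def less_5_cases)

lemma lift_pow: "X \<in> carrier_mat 2 2 \<Longrightarrow> lift (X ^\<^sub>m n) = lift X ^\<^sub>m n"
  by (induction n) (simp_all add: lift_one lift_mult)

lemma Wm_eq_lift_W1: "Wm m d = lift (W1 m d)"
proof -
  have "lift (word 2 A1 B1 m k) = word 5 Am Bm m k" for k
  proof (induction k)
    case (Suc k)
    have "A1 \<in> carrier_mat 2 2" "B1 \<in> carrier_mat 2 2"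
      by (simp_all add: A1_def B1_def)
    with Suc.IH show ?case
      by (simp add: lift_mult lift_pow word2_carrier lift_A1 lift_B1 A1_pow_B1_pow_carrier)
  qed (simp add: lift_one)
  then show ?thesis
    by (simp add: Wm_def W1_def)
qed

definition delete_entry :: "nat \<Rightarrow> nat \<Rightarrow> 'a list \<Rightarrow> 'a list" where
  "delete_entry n j r = map (\<lambda>j'. r ! (if j' < j then j' else Suc j')) [0..<n]"

lemma det_mat_of_rows_list_Suc:
  fixes L :: "'a :: comm_ring_1 list list"
  assumes "length L = Suc n"
  shows "det (mat_of_rows_list (Suc n) L) =
    (\<Sum>j<Suc n. L ! 0 ! j *
      ((-1) ^ j * det (mat_of_rows_list n (map (delete_entry n j) (tl L)))))"
proof -
  have carrier: "mat_of_rows_list (Suc n) L \<in> carrier_mat (Suc n) (Suc n)"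
    using assms by (simp add: mat_of_rows_list_def)
  have minor: "mat_delete (mat_of_rows_list (Suc n) L) 0 j =
      mat_of_rows_list n (map (delete_entry n j) (tl L))" for j
    by (rule eq_matI)
      (use assms in \<open>auto simp: mat_delete_def mat_of_rows_list_def delete_entry_def nth_tl\<close>)
  have "det (mat_of_rows_list (Suc n) L) =
      (\<Sum>j<Suc n. mat_of_rows_list (Suc n) L $$ (0, j) * cofactor (mat_of_rows_list (Suc n) L) 0 j)"
    by (rule laplace_expansion_row[OF carrier]) simp
  also have "\<dots> = (\<Sum>j<Suc n. L ! 0 ! j *
      ((-1) ^ j * det (mat_of_rows_list n (map (delete_entry n j) (tl L)))))"
    unfolding cofactor_def minor using assms
    by (intro sum.cong) (simp_all add: mat_of_rows_list_def)
  finally show ?thesis .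
qed

lemma det_mat_of_rows_list_0: "det (mat_of_rows_list 0 []) = 1"
proof -
  have "mat_of_rows_list 0 [] = 1\<^sub>m 0"
    by (rule eq_matI) (simp_all add: mat_of_rows_list_def)
  then show ?thesis
    by (metis det_one)
qed

lemma det_mat2: "det (mat_of_rows_list 2 [[x, y], [z, w :: 'a :: comm_ring_1]]) = x * w - y * z"
  by (simp add: numeral_eq_Suc det_mat_of_rows_list_Suc det_mat_of_rows_list_0 delete_entry_def)

lemma det_carrier_mat2:
  "A \<in> carrier_mat 2 2 \<Longrightarrow> det A = A $$ (0, 0) * A $$ (1, 1) - A $$ (0, 1) * A $$ (1, 0)"
  by (subst mat2_of_entries) (simp_all add: det_mat2)

lemma det_W1: "det (W1 m d) = 1"
  unfolding W1_def
proof (induction d)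
  case (Suc d)
  then show ?case
    by (simp add: A1_pow_B1_pow det_mult[OF word2_carrier mat2_carrier] det_mat2)
qed simp

definition dominates_id2 :: "real mat \<Rightarrow> bool" where
  "dominates_id2 W \<longleftrightarrow>
    1 \<le> W $$ (0, 0) \<and> 0 \<le> W $$ (0, 1) \<and> 0 \<le> W $$ (1, 0) \<and> 1 \<le> W $$ (1, 1)"

lemma dominates_id2_mult:
  assumes "X \<in> carrier_mat 2 2" "Y \<in> carrier_mat 2 2" "dominates_id2 X" "dominates_id2 Y"
  shows "dominates_id2 (X * Y)"
proof -
  have "1 \<le> a * b + c" "1 \<le> c + a * b" if "1 \<le> a" "1 \<le> b" "0 \<le> c" for a b c :: real
    using mult_mono[of 1 a 1 b] that by simp_all
  with assms show ?thesis
    by (simp add: dominates_id2_def index_mult_mat2 del: index_mult_mat)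
qed

lemma dominates_id2_W1: "dominates_id2 (W1 m d)"
  unfolding W1_def
proof (induction d)
  case 0
  show ?case by (simp add: dominates_id2_def)
next
  case (Suc d)
  have "dominates_id2 (A1 ^\<^sub>m p * B1 ^\<^sub>m q)" for p q
    by (simp add: dominates_id2_def A1_pow_B1_pow)
  with Suc.IH show ?case
    by (simp add: dominates_id2_mult word2_carrier A1_pow_B1_pow_carrier)
qed

lemma tr2_antitr_mult_A1_pow_B1_pow:
  assumes "W \<in> carrier_mat 2 2" "dominates_id2 W" "1 \<le> p" "1 \<le> q"
  shows "2 < tr2 (W * (A1 ^\<^sub>m p * B1 ^\<^sub>m q)) \<and> 0 < antitr (W * (A1 ^\<^sub>m p * B1 ^\<^sub>m q))"
proof -
  define a b c e
    where "a = W $$ (0, 0)" and "b = W $$ (0, 1)" and "c = W $$ (1, 0)" and "e = W $$ (1, 1)"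
  have W: "1 \<le> a" "0 \<le> b" "0 \<le> c" "1 \<le> e"
    using assms(2) by (simp_all add: dominates_id2_def a_def b_def c_def e_def)
  have pq: "1 \<le> real p" "1 \<le> real q"
    using assms(3,4) by simp_all
  have "W * (A1 ^\<^sub>m p * B1 ^\<^sub>m q) = mat_of_rows_list 2
      [[a * (1 + real p * real q) + b * real q, a * real p + b],
       [c * (1 + real p * real q) + e * real q, c * real p + e]]"
    by (subst mat2_of_entries[OF assms(1)])
      (simp add: A1_pow_B1_pow mult_mat2 a_def b_def c_def e_def)
  moreover have "1 \<le> real p * real q" "1 \<le> a * real p"
    using mult_mono[OF pq] mult_mono[OF W(1) pq(1)] W(1) by simp_all
  moreover have "1 + real p * real q \<le> a * (1 + real p * real q)"
    using mult_right_mono[OF W(1), of "1 + real p * real q"] by simp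
  moreover have "0 \<le> b * real q" "0 \<le> c * real p" "0 \<le> c * (1 + real p * real q)"
    "0 \<le> e * real q"
    using W by simp_all
  ultimately show ?thesis
    unfolding tr2_def antitr_def One_nat_def using W by (simp only: mat2_index) linarith
qed

lemma tr2_antitr_W1:
  assumes "1 \<le> d" "\<And>i. i < 2 * d \<Longrightarrow> 0 < m i"
  shows "2 < tr2 (W1 m d) \<and> 0 < antitr (W1 m d)"
proof -
  obtain d' where d': "d = Suc d'"
    using assms(1) by (cases d) simp_all
  have "1 \<le> m (2 * d')" "1 \<le> m (2 * d' + 1)"
    using assms(2) d' by (simp_all add: Suc_le_eq)
  then show ?thesis
    using tr2_antitr_mult_A1_pow_B1_pow[OF word2_carrier dominates_id2_W1[unfolded W1_def]]
    by (simp add: d' W1_def)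
qed

lemma char_matrix_Cm_lift:
  "char_matrix (Cm * lift W) k = mat_of_rows_list 5
    [[W $$ (0, 0) - k, W $$ (0, 1), 0, 0, 2 * W $$ (0, 1)],
     [W $$ (1, 0), W $$ (1, 1) - k, 0, 0, 2 * W $$ (1, 1) - 2],
     [0, 0, W $$ (0, 0) - k, W $$ (0, 1), 2 * W $$ (0, 0) - 2],
     [0, 0, W $$ (1, 0), W $$ (1, 1) - k, 2 * W $$ (1, 0)],
     [2 * W $$ (0, 0), 2 * W $$ (0, 1), 2 * W $$ (1, 0), 2 * W $$ (1, 1),
      4 * W $$ (0, 1) + 4 * W $$ (1, 0) + 1 - k]]"
    (is "_ = ?R")
proof (rule eq_matI)
  fix i j assume "i < dim_row ?R" "j < dim_col ?R"
  then have ij: "i < 5" "j < 5"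
    by (simp_all add: mat_of_rows_list_def)
  then have "char_matrix (Cm * lift W) k $$ (i, j) =
      (\<Sum>l = 0..<5. Cm $$ (i, l) * lift W $$ (l, j)) - (if i = j then k else 0)"
    by (simp add: char_matrix_def scalar_prod_def Cm_def mat_of_rows_list_def)
  also have "\<dots> = ?R $$ (i, j)"
    using ij unfolding sum_upt_5 less_5_cases
    by (elim disjE) (simp_all add: lift_def Cm_def mat_of_rows_list_def algebra_simps)
  finally show "char_matrix (Cm * lift W) k $$ (i, j) = ?R $$ (i, j)" .
qed (simp_all add: char_matrix_def Cm_def mat_of_rows_list_def)

lemma det_mat5_factorization:
  fixes a b c e k :: real
  shows "det (mat_of_rows_list 5
      [[a - k, b, 0, 0, 2 * b],
       [c, e - k, 0, 0, 2 * e - 2],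
       [0, 0, a - k, b, 2 * a - 2],
       [0, 0, c, e - k, 2 * c],
       [2 * a, 2 * b, 2 * c, 2 * e, 4 * b + 4 * c + 1 - k]]) =
    - (k - 1) * (k\<^sup>2 - (a + e) * k + (a * e - b * c))
      * (k\<^sup>2 - (a + e + 4 * (b + c)) * k + (a * e - b * c))"
  by (simp add: det_mat_of_rows_list_Suc det_mat_of_rows_list_0 delete_entry_def numeral_eq_Suc
      lessThan_Suc algebra_simps power2_eq_square)

lemma det_char_matrix_Cm_lift:
  assumes "W \<in> carrier_mat 2 2" "det W = 1"
  shows "det (char_matrix (Cm * lift W) k) =
    - (k - 1) * (k\<^sup>2 - tr2 W * k + 1) * (k\<^sup>2 - (tr2 W + 4 * antitr W) * k + 1)"
proof -
  have "W $$ (0, 0) * W $$ (1, 1) - W $$ (0, 1) * W $$ (1, 0) = 1"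
    using assms by (simp add: det_carrier_mat2)
  then show ?thesis
    unfolding char_matrix_Cm_lift det_mat5_factorization tr2_def antitr_def by (simp only:)
qed

lemma eigenvalue_Cm_lift_iff:
  assumes "W \<in> carrier_mat 2 2" "det W = 1"
  shows "eigenvalue (Cm * lift W) k \<longleftrightarrow>
    k = 1 \<or> k\<^sup>2 - tr2 W * k + 1 = 0 \<or> k\<^sup>2 - (tr2 W + 4 * antitr W) * k + 1 = 0"
proof -
  have "Cm * lift W \<in> carrier_mat 5 5"
    by (intro mult_carrier_mat carrier_matI) (simp_all add: Cm_def mat_of_rows_list_def)
  then show ?thesis
    by (simp add: eigenvalue_det det_char_matrix_Cm_lift[OF assms])
qed

lemma four_less_power2:
  fixes t :: real
  assumes "2 < t"
  shows "4 < t\<^sup>2"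
  using mult_strict_mono[OF assms assms] assms by (simp add: power2_eq_square)

lemma reciprocal_quadratic_eq_0_iff:
  fixes t k :: real
  assumes "2 < t"
  shows "k\<^sup>2 - t * k + 1 = 0 \<longleftrightarrow> k = (t + sqrt (t\<^sup>2 - 4)) / 2 \<or> k = (t - sqrt (t\<^sup>2 - 4)) / 2"
proof -
  have "(sqrt (t\<^sup>2 - 4))\<^sup>2 = t\<^sup>2 - 4"
    using four_less_power2[OF assms] by simp
  then have "k\<^sup>2 - t * k + 1 = (k - (t + sqrt (t\<^sup>2 - 4)) / 2) * (k - (t - sqrt (t\<^sup>2 - 4)) / 2)"
    by (simp add: field_simps power2_eq_square)
  then show ?thesis
    by simp
qed

text \<open>The two roots multiply to \<open>1\<close>, so the smaller root is the inverse of the larger one.\<close>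
lemma reciprocal_quadratic_roots_order:
  fixes t u :: real
  assumes "2 < t" "t < u"
  defines "r \<equiv> sqrt (t\<^sup>2 - 4)" and "R \<equiv> sqrt (u\<^sup>2 - 4)"
  shows "0 < (u - R) / 2 \<and> (u - R) / 2 < (t - r) / 2 \<and> (t - r) / 2 < 1
    \<and> 1 < (t + r) / 2 \<and> (t + r) / 2 < (u + R) / 2"
proof -
  have "4 < t\<^sup>2" "t\<^sup>2 < u\<^sup>2"
    using four_less_power2[OF assms(1)] power_strict_mono[OF assms(2), of 2] assms(1) by simp_all
  then have r: "0 < r" "r < R" "r\<^sup>2 = t\<^sup>2 - 4" and R: "R\<^sup>2 = u\<^sup>2 - 4"
    by (simp_all add: r_def R_def)
  define x y where "x = (t + r) / 2" and "y = (u + R) / 2"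
  have "1 < x" "x < y"
    using assms(1,2) r by (simp_all add: x_def y_def)
  moreover have "(t - r) / 2 = 1 / x" "(u - R) / 2 = 1 / y"
    using r R assms(1,2) by (simp_all add: x_def y_def field_simps power2_eq_square)
  ultimately show ?thesis
    by (simp add: frac_less2 flip: x_def y_def)
qed

theorem mainTheorem12:
  fixes m :: "nat \<Rightarrow> nat" and d :: nat
  assumes "d \<ge> 1"
    and "\<And>i. i < 2 * d \<Longrightarrow> m i > 0"
  defines "t \<equiv> tr2 (W1 m d)" and "s \<equiv> antitr (W1 m d)"
  defines "lam1 \<equiv> (t + 4*s + sqrt ((t + 4*s)^2 - 4)) / 2"
    and "lam2 \<equiv> (t + sqrt (t^2 - 4)) / 2"
    and "lam4 \<equiv> (t - sqrt (t^2 - 4)) / 2"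
    and "lam5 \<equiv> (t + 4*s - sqrt ((t + 4*s)^2 - 4)) / 2"
  shows "{k :: real. eigenvalue (Cm * Wm m d) k} = {1, lam1, lam2, lam4, lam5}
    \<and> card {1, lam1, lam2, lam4, lam5} = 5
    \<and> (\<forall>k \<in> {1, lam1, lam2, lam4, lam5}. k > 0)
    \<and> lam1 > lam2 \<and> lam2 > 1 \<and> 1 > lam4 \<and> lam4 > lam5"
proof -
  have t: "2 < t" and s: "0 < s"
    using tr2_antitr_W1[OF assms(1,2)] by (simp_all add: t_def s_def)
  have eigenvalue_iff: "eigenvalue (Cm * Wm m d) k \<longleftrightarrow>
      k = 1 \<or> k = lam2 \<or> k = lam4 \<or> k = lam1 \<or> k = lam5" for k
    using eigenvalue_Cm_lift_iff[OF word2_carrier[folded W1_def] det_W1]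
      reciprocal_quadratic_eq_0_iff[OF t] reciprocal_quadratic_eq_0_iff[of "t + 4 * s"] t s
    by (simp add: Wm_eq_lift_W1 t_def s_def lam1_def lam2_def lam4_def lam5_def)
  have "0 < lam5 \<and> lam5 < lam4 \<and> lam4 < 1 \<and> 1 < lam2 \<and> lam2 < lam1"
    using reciprocal_quadratic_roots_order[OF t, of "t + 4 * s"] s
    by (simp add: lam1_def lam2_def lam4_def lam5_def)
  then show ?thesis
    by (auto simp: eigenvalue_iff)
qed

end
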